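(* Let $A$ be a set of regular cardinals with no maximum such that $\sup(A)$ is a strong limit cardinal (regular or singular). Then $\operatorname{spec}(A)\setminus\sup(A)\subseteq\operatorname{spec}^*(A)$.
   Context: $\prod A$ is the set of functions $f$ on $A$ with $f(a)\in a$, ordered pointwise. $\operatorname{spec}(A)$ is the set of regular $\lambda$ for which some $\mathcal{F}\subseteq\prod A$ of size $\lambda$ has every $\lambda$-sized subset unbounded in $(\prod A,<)$. For $\mathcal{G}\subseteq\prod A$, $\operatorname{ub}(\mathcal{G})$ is the set of $a\in A$ such that $\{f(a):f\in\mathcal{G}\}$ is unbounded in $a$. $\operatorname{spec}^*(A)$ (the strong part of the Tukey spectrum) is the set of regular $\lambda$ such that there is $\mathcal{F}\subseteq\prod A$ of size $\lambda$ such that for every $\mathcal{F}_0\subseteq\mathcal{F}$ of size $\lambda$, $\operatorname{ub}(\mathcal{F}_0)$ is unbounded in $\sup(A)$. $\operatorname{spec}(A)\setminus\sup(A)$ denotes the members of $\operatorname{spec}(A)$ that are $\geq\sup(A)$. *)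

theory Defs
  imports Main "HOL-Library.FuncSet"
begin

text \<open>Ordinals are modelled as elements of an arbitrary well-ordered type 'o;
  the ordinal alpha is identified with its set of predecessors.\<close>

definition seg :: "'o::wellorder \<Rightarrow> 'o set" where
  "seg \<alpha> = {x. x < \<alpha>}"

definition is_cardinal :: "'o::wellorder \<Rightarrow> bool" where
  "is_cardinal \<kappa> \<longleftrightarrow> (\<forall>\<beta><\<kappa>. \<not> ( ordIso2 (card_of (seg \<beta>)) (card_of (seg \<kappa>)) ))"

definition regular :: "'o::wellorder \<Rightarrow> bool" where
  "regular \<kappa> \<longleftrightarrow> is_cardinal \<kappa> \<and> infinite (seg \<kappa>) \<and>
     (\<forall>X \<subseteq> seg \<kappa>. (\<forall>\<alpha><\<kappa>. \<exists>x\<in>X. \<alpha> \<le> x) \<longrightarrow> ordLeq2 (card_of (seg \<kappa>)) (card_of (X)) )"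

definition strong_limit :: "'o::wellorder \<Rightarrow> bool" where
  "strong_limit \<kappa> \<longleftrightarrow> is_cardinal \<kappa> \<and> infinite (seg \<kappa>) \<and>
     (\<forall>\<beta><\<kappa>. ordLess2 (card_of (Pow (seg \<beta>))) (card_of (seg \<kappa>)) )"

definition is_sup :: "'o::wellorder set \<Rightarrow> 'o \<Rightarrow> bool" where
  "is_sup A \<mu> \<longleftrightarrow> (\<forall>a\<in>A. a \<le> \<mu>) \<and> (\<forall>\<beta>. (\<forall>a\<in>A. a \<le> \<beta>) \<longrightarrow> \<mu> \<le> \<beta>)"

definition prodA :: "'o::wellorder set \<Rightarrow> ('o \<Rightarrow> 'o) set" where
  "prodA A = {f \<in> extensional A. \<forall>a\<in>A. f a < a}"

definition pw_less :: "'o::wellorder set \<Rightarrow> ('o \<Rightarrow> 'o) \<Rightarrow> ('o \<Rightarrow> 'o) \<Rightarrow> bool" where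
  "pw_less A f g \<longleftrightarrow> (\<forall>a\<in>A. f a < g a)"

definition bounded_in_prod :: "'o::wellorder set \<Rightarrow> ('o \<Rightarrow> 'o) set \<Rightarrow> bool" where
  "bounded_in_prod A G \<longleftrightarrow> (\<exists>g\<in>prodA A. \<forall>f\<in>G. pw_less A f g)"

definition spec :: "'o::wellorder set \<Rightarrow> 'o set" where
  "spec A = {la. regular la \<and> (\<exists>F \<subseteq> prodA A. ordIso2 (card_of (F)) (card_of (seg la)) \<and>
       (\<forall>F0 \<subseteq> F. ordIso2 (card_of (F0)) (card_of (seg la)) \<longrightarrow> \<not> bounded_in_prod A F0))}"

definition ub :: "'o::wellorder set \<Rightarrow> ('o \<Rightarrow> 'o) set \<Rightarrow> 'o set" where
  "ub A G = {a \<in> A. \<forall>\<beta><a. \<exists>f\<in>G. \<beta> \<le> f a}"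

definition spec_star :: "'o::wellorder set \<Rightarrow> 'o \<Rightarrow> 'o set" where
  "spec_star A \<mu> = {la. regular la \<and> (\<exists>F \<subseteq> prodA A. ordIso2 (card_of (F)) (card_of (seg la)) \<and>
       (\<forall>F0 \<subseteq> F. ordIso2 (card_of (F0)) (card_of (seg la)) \<longrightarrow> (\<forall>\<beta><\<mu>. \<exists>a\<in>ub A F0. \<beta> \<le> a)))}"

end

theory Submission
  imports Defs
begin

text \<open>Suppose \<open>F\<^sub>0 \<subseteq> F\<close> has size \<open>\<lambda> \<ge> \<mu>\<close> but \<open>ub(F\<^sub>0)\<close> is bounded by some \<open>\<beta> < \<mu>\<close>.
  The restrictions of members of \<open>F\<^sub>0\<close> to \<open>A \<inter> \<beta>\<close> take at most \<open>2\<^bsup>|\<beta>|\<^esup> < \<mu> \<le> \<lambda>\<close> values,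
  so by regularity of \<open>\<lambda>\<close> some \<open>\<lambda>\<close>-sized \<open>G \<subseteq> F\<^sub>0\<close> consists of functions agreeing below \<open>\<beta>\<close>.
  Above \<open>\<beta>\<close> every coordinate of \<open>F\<^sub>0\<close> is bounded, and below \<open>\<beta>\<close> the members of \<open>G\<close> share
  their values; as the members of \<open>A\<close> are limit ordinals, \<open>G\<close> is bounded in \<open>\<Pi>A\<close>,
  contradicting \<open>\<lambda> \<in> spec(A)\<close>.\<close>

unbundle cardinal_syntax

lemma regular_dense_below:
  fixes a x :: "'o::wellorder"
  assumes "regular a" "x < a"
  shows "\<exists>y. x < y \<and> y < a"
proof (rule ccontr)
  assume "\<not> ?thesis"
  then have "\<forall>\<alpha><a. \<exists>y\<in>{x}. \<alpha> \<le> y"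
    by (meson leI singletonI)
  moreover have "{x} \<subseteq> seg a"
    using assms(2) by (simp add: seg_def)
  ultimately have "|seg a| \<le>o |{x}|"
    using assms(1) by (simp add: regular_def)
  then have "finite (seg a)"
    using card_of_ordLeq_finite by blast
  then show False
    using assms(1) by (simp add: regular_def)
qed

lemma regular_bounded_of_card_less:
  fixes \<kappa> :: "'o::wellorder"
  assumes "regular \<kappa>" "Y \<subseteq> seg \<kappa>" "|Y| <o |seg \<kappa>|"
  shows "\<exists>\<alpha><\<kappa>. \<forall>y\<in>Y. y < \<alpha>"
proof (rule ccontr)
  assume "\<not> ?thesis"
  then have "\<forall>\<alpha><\<kappa>. \<exists>y\<in>Y. \<alpha> \<le> y"
    by (meson not_less)
  then have "|seg \<kappa>| \<le>o |Y|"
    using assms(1,2) by (simp add: regular_def)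
  then show False
    using assms(3) not_ordLess_ordLeq by blast
qed

lemma regular_card_UN_less:
  fixes \<kappa> :: "'o::wellorder"
  assumes reg: "regular \<kappa>" and I: "|I| <o |seg \<kappa>|"
    and X: "\<And>i. i \<in> I \<Longrightarrow> |X i| <o |seg \<kappa>|"
  shows "|\<Union>i\<in>I. X i| <o |seg \<kappa>|"
proof (rule ccontr)
  let ?U = "\<Union>i\<in>I. X i"
  assume "\<not> ?thesis"
  then have "|seg \<kappa>| \<le>o |?U|"
    using not_ordLess_iff_ordLeq[OF card_of_Well_order card_of_Well_order] by blast
  moreover have "seg \<kappa> \<noteq> {}"
    using reg by (auto simp: regular_def)
  ultimately obtain e where e: "e ` ?U = seg \<kappa>"
    using card_of_ordLeq2[of "seg \<kappa>" ?U] by blast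
  have "\<exists>\<alpha><\<kappa>. \<forall>y\<in>e ` X i. y < \<alpha>" if "i \<in> I" for i
  proof (rule regular_bounded_of_card_less[OF reg])
    have "e ` X i \<subseteq> e ` ?U"
      using that by blast
    then show "e ` X i \<subseteq> seg \<kappa>"
      by (simp only: e)
    show "|e ` X i| <o |seg \<kappa>|"
      using card_of_image X[OF that] by (rule ordLeq_ordLess_trans)
  qed
  then have "\<forall>i\<in>I. \<exists>\<alpha>. \<alpha> < \<kappa> \<and> (\<forall>y\<in>e ` X i. y < \<alpha>)"
    by blast
  then obtain bound where bound: "\<And>i. i \<in> I \<Longrightarrow> bound i < \<kappa> \<and> (\<forall>y\<in>e ` X i. y < bound i)"
    by metis
  have "\<exists>\<gamma><\<kappa>. \<forall>y\<in>bound ` I. y < \<gamma>"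
  proof (rule regular_bounded_of_card_less[OF reg])
    show "bound ` I \<subseteq> seg \<kappa>"
      using bound by (auto simp: seg_def)
    show "|bound ` I| <o |seg \<kappa>|"
      using card_of_image I by (rule ordLeq_ordLess_trans)
  qed
  then obtain \<gamma> where "\<gamma> < \<kappa>" and \<gamma>: "\<And>i. i \<in> I \<Longrightarrow> bound i < \<gamma>"
    by blast
  then have "\<gamma> \<in> e ` ?U"
    using e by (simp add: seg_def)
  then obtain i u where "i \<in> I" "u \<in> X i" "\<gamma> = e u"
    by blast
  then have "\<gamma> < bound i"
    using bound[OF \<open>i \<in> I\<close>] by blast
  then show False
    using \<gamma>[OF \<open>i \<in> I\<close>] by simp
qed

lemma card_of_PiE_le_Pow:
  assumes "infinite B" "D \<subseteq> B"
  shows "|D \<rightarrow>\<^sub>E B| \<le>o |Pow B|"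
proof -
  have "|B \<times> B| \<le>o |B|"
    using card_of_Times_same_infinite[OF assms(1)] ordIso_iff_ordLeq by blast
  then obtain pair where pair: "inj_on pair (B \<times> B)" "pair ` (B \<times> B) \<subseteq> B"
    unfolding card_of_ordLeq[symmetric] by blast
  define graph where "graph f = {(a, f a) | a. a \<in> D}" for f :: "'a \<Rightarrow> 'a"
  have graph_sub: "graph f \<subseteq> B \<times> B" if "f \<in> D \<rightarrow>\<^sub>E B" for f
    using that assms(2) by (auto simp: graph_def)
  have "inj_on (\<lambda>f. pair ` graph f) (D \<rightarrow>\<^sub>E B)"
  proof (rule inj_onI)
    fix f g assume f: "f \<in> D \<rightarrow>\<^sub>E B" and g: "g \<in> D \<rightarrow>\<^sub>E B"
      and "pair ` graph f = pair ` graph g"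
    then have "graph f = graph g"
      using inj_on_image_eq_iff[OF pair(1) graph_sub[OF f] graph_sub[OF g]] by simp
    then have "f a = g a" if "a \<in> D" for a
      using that unfolding graph_def by blast
    then show "f = g"
      by (rule PiE_ext[OF f g])
  qed
  moreover have "(\<lambda>f. pair ` graph f) ` (D \<rightarrow>\<^sub>E B) \<subseteq> Pow B"
    using pair(2) graph_sub by blast
  ultimately show ?thesis
    unfolding card_of_ordLeq[symmetric] by blast
qed

lemma regular_fiber_same_card:
  fixes \<kappa> :: "'o::wellorder"
  assumes "regular \<kappa>" "|F| =o |seg \<kappa>|" "|\<phi> ` F| <o |seg \<kappa>|"
  shows "\<exists>h\<in>\<phi> ` F. |{f \<in> F. \<phi> f = h}| =o |seg \<kappa>|"
proof (rule ccontr)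
  assume no_full_fiber: "\<not> ?thesis"
  have "|{f \<in> F. \<phi> f = h}| <o |seg \<kappa>|" if "h \<in> \<phi> ` F" for h
  proof -
    have "|{f \<in> F. \<phi> f = h}| \<le>o |F|"
      by (rule card_of_mono1) blast
    then have "|{f \<in> F. \<phi> f = h}| \<le>o |seg \<kappa>|"
      using assms(2) by (rule ordLeq_ordIso_trans)
    then show ?thesis
      using no_full_fiber that ordLeq_iff_ordLess_or_ordIso by blast
  qed
  then have "|\<Union>h\<in>\<phi> ` F. {f \<in> F. \<phi> f = h}| <o |seg \<kappa>|"
    by (rule regular_card_UN_less[OF assms(1,3)])
  moreover have "(\<Union>h\<in>\<phi> ` F. {f \<in> F. \<phi> f = h}) = F"
    by blast
  ultimately show False
    using assms(2) not_ordLess_ordIso by fastforce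
qed

lemma bounded_in_prodI:
  assumes "\<forall>a\<in>A. regular a" and "\<forall>a\<in>A. \<exists>y<a. \<forall>f\<in>G. f a \<le> y"
  shows "bounded_in_prod A G"
proof -
  have "\<forall>a\<in>A. \<exists>z<a. \<forall>f\<in>G. f a < z"
    using assms regular_dense_below by (meson le_less_trans)
  then obtain z where z: "\<And>a. a \<in> A \<Longrightarrow> z a < a \<and> (\<forall>f\<in>G. f a < z a)"
    using bchoice[of A "\<lambda>a z. z < a \<and> (\<forall>f\<in>G. f a < z)"] by blast
  have "restrict z A \<in> prodA A" and "\<forall>f\<in>G. pw_less A f (restrict z A)"
    using z by (auto simp: prodA_def pw_less_def)
  then show ?thesis
    unfolding bounded_in_prod_def by blast
qed

lemma bounded_subfamily_if_ub_bounded: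
  fixes la \<beta> :: "'o::wellorder"
  assumes reg_A: "\<forall>a\<in>A. regular a" and reg: "regular la"
    and F: "F \<subseteq> prodA A" "|F| =o |seg la|"
    and \<beta>: "infinite (seg \<beta>)" "|Pow (seg \<beta>)| <o |seg la|" "ub A F \<subseteq> seg \<beta>"
  shows "\<exists>G\<subseteq>F. |G| =o |seg la| \<and> bounded_in_prod A G"
proof -
  define \<phi> where "\<phi> f = restrict f (A \<inter> seg \<beta>)" for f :: "'o \<Rightarrow> 'o"
  have "f a < \<beta>" if "f \<in> F" "a \<in> A" "a < \<beta>" for f a
  proof -
    have "f a < a"
      using that(1,2) F(1) by (auto simp: prodA_def)
    then show ?thesis
      using that(3) by (rule less_trans)
  qed
  then have "\<phi> ` F \<subseteq> A \<inter> seg \<beta> \<rightarrow>\<^sub>E seg \<beta>"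
    unfolding \<phi>_def by (intro image_subsetI) (simp add: restrict_PiE_iff seg_def)
  then have "|\<phi> ` F| \<le>o |A \<inter> seg \<beta> \<rightarrow>\<^sub>E seg \<beta>|"
    by (rule card_of_mono1)
  also have "|A \<inter> seg \<beta> \<rightarrow>\<^sub>E seg \<beta>| \<le>o |Pow (seg \<beta>)|"
    using \<beta>(1) by (rule card_of_PiE_le_Pow) blast
  finally have "|\<phi> ` F| <o |seg la|"
    using \<beta>(2) by (rule ordLeq_ordLess_trans)
  then obtain h where "h \<in> \<phi> ` F" and fiber: "|{f \<in> F. \<phi> f = h}| =o |seg la|"
    using regular_fiber_same_card[OF reg F(2)] by blast
  then obtain f\<^sub>1 where "f\<^sub>1 \<in> F" and "h = \<phi> f\<^sub>1"
    by blast
  with fiber have G: "|{f \<in> F. \<phi> f = \<phi> f\<^sub>1}| =o |seg la|"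
    by simp
  have "bounded_in_prod A {f \<in> F. \<phi> f = \<phi> f\<^sub>1}"
  proof (rule bounded_in_prodI[OF reg_A], intro ballI)
    fix a assume a: "a \<in> A"
    show "\<exists>y<a. \<forall>f\<in>{f \<in> F. \<phi> f = \<phi> f\<^sub>1}. f a \<le> y"
    proof (cases "a < \<beta>")
      case True
      have "f a \<le> f\<^sub>1 a" if "\<phi> f = \<phi> f\<^sub>1" for f
      proof -
        have "\<phi> f a = \<phi> f\<^sub>1 a"
          using that by simp
        then show ?thesis
          using a True by (simp add: \<phi>_def seg_def)
      qed
      moreover have "f\<^sub>1 a < a"
        using \<open>f\<^sub>1 \<in> F\<close> F(1) a by (auto simp: prodA_def)
      ultimately show ?thesis
        by blast
    next
      case False
      then have "a \<notin> ub A F"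
        using \<beta>(3) by (auto simp: seg_def)
      then obtain y where "y < a" "\<forall>f\<in>F. f a < y"
        using a by (auto simp: ub_def not_le)
      then show ?thesis
        by (intro exI[of _ y]) (simp add: less_imp_le)
    qed
  qed
  moreover have "{f \<in> F. \<phi> f = \<phi> f\<^sub>1} \<subseteq> F"
    by blast
  ultimately show ?thesis
    using G by (intro exI[of _ "{f \<in> F. \<phi> f = \<phi> f\<^sub>1}"] conjI)
qed

lemma infinite_seg_below_sup:
  fixes \<mu> :: "'o::wellorder"
  assumes "\<forall>a\<in>A. regular a" "\<forall>a\<in>A. \<exists>b\<in>A. a < b" "is_sup A \<mu>" "strong_limit \<mu>"
  shows "\<exists>a<\<mu>. infinite (seg a)"
proof -
  have "seg \<mu> \<noteq> {}"
    using assms(4) by (auto simp: strong_limit_def)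
  then obtain a where "a \<in> A"
    using assms(3) by (force simp: is_sup_def seg_def not_less)
  then obtain b where "b \<in> A" "a < b"
    using assms(2) by blast
  then have "a < \<mu>"
    using assms(3) by (meson is_sup_def less_le_trans)
  then show ?thesis
    using assms(1) \<open>a \<in> A\<close> by (auto simp: regular_def)
qed

lemma ub_unbounded_if_no_bounded_subfamily:
  fixes la \<mu> \<beta> :: "'o::wellorder"
  assumes reg_A: "\<forall>a\<in>A. regular a" and reg: "regular la"
    and \<mu>: "strong_limit \<mu>" "\<mu> \<le> la"
    and F: "F \<subseteq> prodA A" "|F| =o |seg la|"
    and unbounded: "\<forall>G\<subseteq>F. |G| =o |seg la| \<longrightarrow> \<not> bounded_in_prod A G"
    and \<beta>: "\<beta> < \<mu>" "infinite (seg \<beta>)"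
  shows "\<exists>a\<in>ub A F. \<beta> \<le> a"
proof (rule ccontr)
  assume "\<not> ?thesis"
  then have "ub A F \<subseteq> seg \<beta>"
    by (auto simp: seg_def not_le)
  moreover have "|Pow (seg \<beta>)| <o |seg la|"
  proof -
    have "|Pow (seg \<beta>)| <o |seg \<mu>|"
      using \<mu>(1) \<beta>(1) unfolding strong_limit_def by blast
    also have "|seg \<mu>| \<le>o |seg la|"
      using \<mu>(2) by (intro card_of_mono1) (auto simp: seg_def)
    finally show ?thesis .
  qed
  ultimately show False
    using bounded_subfamily_if_ub_bounded[OF reg_A reg F \<beta>(2)] unbounded by blast
qed

theorem lemma5p3:
  fixes A :: "'o::wellorder set" and \<mu> :: 'o
  assumes "\<forall>a\<in>A. regular a"
    and "\<forall>a\<in>A. \<exists>b\<in>A. a < b"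
    and "is_sup A \<mu>"
    and "strong_limit \<mu>"
  shows "{la \<in> spec A. \<mu> \<le> la} \<subseteq> spec_star A \<mu>"
proof
  fix la assume "la \<in> {la \<in> spec A. \<mu> \<le> la}"
  then obtain F where reg: "regular la" and "\<mu> \<le> la"
    and F: "F \<subseteq> prodA A" "|F| =o |seg la|"
    and unbounded: "\<forall>F\<^sub>0\<subseteq>F. |F\<^sub>0| =o |seg la| \<longrightarrow> \<not> bounded_in_prod A F\<^sub>0"
    unfolding spec_def by blast
  obtain a\<^sub>0 where "a\<^sub>0 < \<mu>" "infinite (seg a\<^sub>0)"
    using infinite_seg_below_sup assms by blast
  have "\<exists>a\<in>ub A F\<^sub>0. \<beta>\<^sub>0 \<le> a"
    if F\<^sub>0: "F\<^sub>0 \<subseteq> F" "|F\<^sub>0| =o |seg la|" and "\<beta>\<^sub>0 < \<mu>" for F\<^sub>0 \<beta>\<^sub>0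
  proof -
    \<comment> \<open>Passing to the infinite ordinal \<open>max \<beta>\<^sub>0 a\<^sub>0\<close> makes the bound \<open>|\<beta> \<rightarrow> \<beta>| \<le> 2\<^bsup>|\<beta>|\<^esup>\<close> applicable.\<close>
    have "max \<beta>\<^sub>0 a\<^sub>0 < \<mu>" "infinite (seg (max \<beta>\<^sub>0 a\<^sub>0))"
      using \<open>\<beta>\<^sub>0 < \<mu>\<close> \<open>a\<^sub>0 < \<mu>\<close> \<open>infinite (seg a\<^sub>0)\<close>
      by (auto simp: seg_def less_max_iff_disj elim!: infinite_super[rotated])
    moreover have "F\<^sub>0 \<subseteq> prodA A" "\<forall>G\<subseteq>F\<^sub>0. |G| =o |seg la| \<longrightarrow> \<not> bounded_in_prod A G"
      using F(1) F\<^sub>0(1) unbounded by blast+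
    ultimately obtain a where "a \<in> ub A F\<^sub>0" "max \<beta>\<^sub>0 a\<^sub>0 \<le> a"
      using ub_unbounded_if_no_bounded_subfamily[OF assms(1) reg assms(4) \<open>\<mu> \<le> la\<close> _ F\<^sub>0(2)]
      by blast
    then show ?thesis
      by auto
  qed
  then show "la \<in> spec_star A \<mu>"
    unfolding spec_star_def using reg F by blast
qed

end
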